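(* Let $\alpha\in[1/2,1]$, $\rho_{AB}\in\mathcal{D}(AB)$ with $A,B$ finite-dimensional, $d_A=\dim A$, and $\sigma^{(\alpha)}_B=\frac{(\operatorname{tr}_A\rho_{AB}^\alpha)^{1/\alpha}}{Z}$ with $Z=\operatorname{tr}\big[(\operatorname{tr}_A\rho_{AB}^\alpha)^{1/\alpha}\big]$. Then $$D_{\mathbb{P},3/2}(\rho_{AB}\|I_A\otimes\sigma^{(\alpha)}_B)\le4\log d_A.$$
   Context: $\mathcal{D}(X)$ is the set of density operators on $\mathcal{H}_X$. Petz Rényi divergence: $D_{\mathbb{P},\alpha}(\rho\|\sigma)=\frac1{\alpha-1}\log\operatorname{tr}[\rho^\alpha\sigma^{1-\alpha}]$ if $\operatorname{supp}\rho\subseteq\operatorname{supp}\sigma$ and $+\infty$ otherwise (for $\alpha=3/2$, $\sigma^{-1/2}$ is taken on the support of $\sigma$). *)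

theory Defs
  imports "Jordan_Normal_Form.Matrix" "HOL-Library.Extended_Real"
begin

text \<open>Finite-dimensional operators are represented as complex square matrices.
  The composite system AB of dimensions dA, dB uses the index i * dB + j
  for the basis vector e_i (x) e_j (i < dA, j < dB).\<close>

definition adj :: "complex mat \<Rightarrow> complex mat" where
  "adj A = mat (dim_col A) (dim_row A) (\<lambda>(i,j). cnj (A $$ (j,i)))"

definition unitary_mat :: "nat \<Rightarrow> complex mat \<Rightarrow> bool" where
  "unitary_mat n U \<longleftrightarrow> U \<in> carrier_mat n n \<and> U * adj U = 1\<^sub>m n \<and> adj U * U = 1\<^sub>m n"

definition diag_real :: "real list \<Rightarrow> complex mat" where
  "diag_real ls = mat (length ls) (length ls)
     (\<lambda>(i,j). if i = j then complex_of_real (ls ! i) else 0)"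

definition mtrace :: "complex mat \<Rightarrow> complex" where
  "mtrace A = (\<Sum>i<dim_row A. A $$ (i,i))"

definition psd :: "nat \<Rightarrow> complex mat \<Rightarrow> bool" where
  "psd n A \<longleftrightarrow> A \<in> carrier_mat n n \<and> adj A = A \<and>
     (\<forall>v \<in> carrier_vec n. 0 \<le> Re (conjugate v \<bullet> (A *\<^sub>v v)))"

definition density :: "nat \<Rightarrow> complex mat \<Rightarrow> bool" where
  "density n \<rho> \<longleftrightarrow> psd n \<rho> \<and> mtrace \<rho> = 1"

definition mat_fun :: "nat \<Rightarrow> (real \<Rightarrow> real) \<Rightarrow> complex mat \<Rightarrow> complex mat" where
  "mat_fun n f A = (SOME B. \<exists>U ls. unitary_mat n U \<and> length ls = n \<and>
       A = U * diag_real ls * adj U \<and> B = U * diag_real (map f ls) * adj U)"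

text \<open>Real powers of PSD matrices; since 0 powr p = 0, negative powers are
  automatically taken on the support.\<close>
definition mat_powr :: "nat \<Rightarrow> complex mat \<Rightarrow> real \<Rightarrow> complex mat" where
  "mat_powr n A p = mat_fun n (\<lambda>x. x powr p) A"

definition supp :: "nat \<Rightarrow> complex mat \<Rightarrow> complex vec set" where
  "supp n A = {A *\<^sub>v v | v. v \<in> carrier_vec n}"

definition petz_renyi :: "nat \<Rightarrow> real \<Rightarrow> complex mat \<Rightarrow> complex mat \<Rightarrow> ereal" where
  "petz_renyi n a \<rho> \<sigma> =
     (if supp n \<rho> \<subseteq> supp n \<sigma>
      then ereal (1 / (a - 1) * ln (Re (mtrace (mat_powr n \<rho> a * mat_powr n \<sigma> (1 - a)))))
      else \<infinity>)"

definition ptrace_A :: "nat \<Rightarrow> nat \<Rightarrow> complex mat \<Rightarrow> complex mat" where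
  "ptrace_A dA dB X = mat dB dB (\<lambda>(j,j'). \<Sum>i<dA. X $$ (i * dB + j, i * dB + j'))"

definition id_tensor :: "nat \<Rightarrow> nat \<Rightarrow> complex mat \<Rightarrow> complex mat" where
  "id_tensor dA dB X = mat (dA * dB) (dA * dB)
     (\<lambda>(k,l). if k div dB = l div dB then X $$ (k mod dB, l mod dB) else 0)"

end

theory Submission
  imports Defs "Jordan_Normal_Form.Spectral_Radius" "HOL-Analysis.Convex"
begin

text \<open>Write \<rho> = U diag(\<lambda>) U*, so that \<rho>^\<alpha> = U diag(\<lambda>^\<alpha>) U*, and tr_A \<rho>^\<alpha> = V diag(x) V*; then
  \<sigma> = V diag(\<tau>) V* with \<tau>_j = x_j^(1/\<alpha>) / Z. Everything is read off the unitary g = U* (I_A \<otimes> V),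
  with entries g(m,a,j), in terms of which x_j = \<Sum>_{a,m} \<lambda>_m^\<alpha> |g(m,a,j)|^2.
  Concavity of t^\<alpha> (in Hoelder form) turns this into Z = \<Sum>_j x_j^(1/\<alpha>) \<le> d_A.
  Since \<lambda>_m^\<alpha> |u_m\<rangle>\<langle>u_m| \<le> \<rho>^\<alpha> for each eigenvector u_m of \<rho>, every diagonal block
  (\<langle>a| \<otimes> I) \<lambda>_m^\<alpha> |u_m\<rangle>\<langle>u_m| (|a\<rangle> \<otimes> I) is at most tr_A \<rho>^\<alpha>, which gives
  \<lambda>_m^\<alpha> \<Sum>_j |g(m,a,j)|^2 / x_j \<le> 1.
  Now tr \<rho>^(3/2) (I_A \<otimes> \<sigma>)^(-1/2) = \<surd>Z \<Sum> \<lambda>_m^(3/2) x_j^(-1/(2\<alpha>)) |g(m,a,j)|^2, and weighted AM-GM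
  with weight q = 1/(2\<alpha>) bounds each term by (q \<lambda>_m^(1+\<alpha>) / x_j + (1-q) \<lambda>_m) |g(m,a,j)|^2; by the
  previous bound and unitarity of g the sum is at most q d_A + 1 - q \<le> d_A. Hence the trace is at most
  \<surd>Z d_A \<le> d_A^2, i.e. the divergence is at most 4 log d_A. The support condition holds because
  g(m,a,j) = 0 whenever x_j = 0 < \<lambda>_m.\<close>

lemma sum_lessThan_mult_blocks:
  fixes g :: "nat \<Rightarrow> 'a::comm_monoid_add"
  shows "(\<Sum>k<m * n. g k) = (\<Sum>a<m. \<Sum>j<n. g (a * n + j))"
proof (induction m)
  case (Suc a)
  have "(\<Sum>k<Suc a * n. g k) = (\<Sum>k<a * n. g k) + (\<Sum>k\<in>{a * n..<a * n + n}. g k)"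
    by (simp add: lessThan_atLeast0 sum.atLeastLessThan_concat add.commute)
  also have "(\<Sum>k\<in>{a * n..<a * n + n}. g k) = (\<Sum>j<n. g (a * n + j))"
    using sum.shift_bounds_nat_ivl[of g 0 "a * n" n] by (simp add: lessThan_atLeast0 add.commute)
  finally show ?case using Suc by simp
qed simp

lemma block_index_less: "a < m \<Longrightarrow> j < n \<Longrightarrow> a * n + j < m * (n::nat)"
proof -
  assume "a < m" "j < n"
  then have "a * n + j < Suc a * n" by simp
  also have "\<dots> \<le> m * n" using \<open>a < m\<close> by (intro mult_right_mono) auto
  finally show ?thesis .
qed

lemma div_mod_eq_iff: "k div n = l div n \<and> k mod n = l mod n \<longleftrightarrow> k = (l::nat)"
  by (metis div_mult_mod_eq)

lemma sum_lessThan_mult_block_select: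
  fixes h :: "nat \<Rightarrow> 'a::comm_monoid_add"
  assumes "a < m"
  shows "(\<Sum>k<m * n. if k div n = a then h (k mod n) else 0) = (\<Sum>j<n. h j)"
proof -
  have "(\<Sum>k<m * n. if k div n = a then h (k mod n) else 0) = (\<Sum>b<m. \<Sum>j<n. if b = a then h j else 0)"
    by (subst sum_lessThan_mult_blocks) (intro sum.cong refl, auto)
  also have "\<dots> = (\<Sum>j<n. h j)"
    by (subst sum.swap) (simp add: assms)
  finally show ?thesis .
qed

lemma sum_swap_pairs:
  "(\<Sum>i\<in>A. \<Sum>j\<in>B. \<Sum>k\<in>C. \<Sum>l\<in>D. f i j k l) = (\<Sum>k\<in>C. \<Sum>l\<in>D. \<Sum>i\<in>A. \<Sum>j\<in>B. f i j k l)"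
proof -
  have "(\<Sum>i\<in>A. \<Sum>j\<in>B. \<Sum>k\<in>C. \<Sum>l\<in>D. f i j k l) = (\<Sum>i\<in>A. \<Sum>k\<in>C. \<Sum>l\<in>D. \<Sum>j\<in>B. f i j k l)"
    by (intro sum.cong refl) (subst sum.swap, intro sum.cong refl, rule sum.swap)
  also have "\<dots> = (\<Sum>k\<in>C. \<Sum>l\<in>D. \<Sum>i\<in>A. \<Sum>j\<in>B. f i j k l)"
    by (subst sum.swap) (intro sum.cong refl, rule sum.swap)
  finally show ?thesis .
qed

lemma of_real_cmod_square: "(complex_of_real (cmod z))\<^sup>2 = z * cnj z"
  using complex_norm_square[of z] by simp

lemma index_mult_mat_sum:
  assumes "A \<in> carrier_mat n m" "B \<in> carrier_mat m p" "i < n" "j < p"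
  shows "(A * B) $$ (i, j) = (\<Sum>k<m. A $$ (i, k) * B $$ (k, j))"
  using assms by (auto simp: scalar_prod_def lessThan_atLeast0 intro!: sum.cong)

lemma adj_carrier [simp]: "A \<in> carrier_mat n m \<Longrightarrow> adj A \<in> carrier_mat m n"
  by (auto simp: adj_def)

lemma adj_dim [simp]: "dim_row (adj A) = dim_col A" "dim_col (adj A) = dim_row A"
  by (auto simp: adj_def)

lemma index_adj [simp]: "i < dim_col A \<Longrightarrow> j < dim_row A \<Longrightarrow> adj A $$ (i, j) = cnj (A $$ (j, i))"
  by (auto simp: adj_def)

lemma adj_adj [simp]: "adj (adj A) = A"
  by (auto simp: adj_def)

lemma adj_mult:
  assumes A: "A \<in> carrier_mat n m" and B: "B \<in> carrier_mat m p"
  shows "adj (A * B) = adj B * adj A"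
proof (rule eq_matI)
  fix i j assume "i < dim_row (adj B * adj A)" "j < dim_col (adj B * adj A)"
  then have i: "i < p" and j: "j < n" using A B by auto
  have "adj (A * B) $$ (i, j) = cnj ((A * B) $$ (j, i))"
    using i j A B by (intro index_adj) auto
  also have "\<dots> = cnj (\<Sum>k<m. A $$ (j, k) * B $$ (k, i))"
    by (simp only: index_mult_mat_sum[OF A B j i])
  also have "\<dots> = (\<Sum>k<m. adj B $$ (i, k) * adj A $$ (k, j))"
    using i j A B by (simp add: mult.commute)
  also have "\<dots> = (adj B * adj A) $$ (i, j)"
    using i j A B by (intro index_mult_mat_sum[symmetric]) auto
  finally show "adj (A * B) $$ (i, j) = (adj B * adj A) $$ (i, j)" .
qed (use A B in auto)

lemma diag_real_carrier [simp]: "diag_real d \<in> carrier_mat (length d) (length d)"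
  by (auto simp: diag_real_def)

lemma diag_real_dim [simp]: "dim_row (diag_real d) = length d" "dim_col (diag_real d) = length d"
  by (auto simp: diag_real_def)

lemma index_diag_real [simp]:
  "i < length d \<Longrightarrow> j < length d \<Longrightarrow> diag_real d $$ (i, j) = (if i = j then of_real (d ! i) else 0)"
  by (auto simp: diag_real_def)

lemma index_mult_diag_real:
  assumes "A \<in> carrier_mat n n" "length d = n" "i < n" "j < n"
  shows "(A * diag_real d) $$ (i, j) = A $$ (i, j) * of_real (d ! j)"
proof -
  have "(A * diag_real d) $$ (i, j) = (\<Sum>k<n. A $$ (i, k) * diag_real d $$ (k, j))"
    using assms by (intro index_mult_mat_sum) auto
  also have "\<dots> = (\<Sum>k<n. if k = j then A $$ (i, j) * of_real (d ! j) else 0)"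
    using assms by (intro sum.cong) auto
  finally show ?thesis using assms by simp
qed

lemma index_diag_real_mult:
  assumes "A \<in> carrier_mat n n" "length d = n" "i < n" "j < n"
  shows "(diag_real d * A) $$ (i, j) = of_real (d ! i) * A $$ (i, j)"
proof -
  have "(diag_real d * A) $$ (i, j) = (\<Sum>k<n. diag_real d $$ (i, k) * A $$ (k, j))"
    using assms by (intro index_mult_mat_sum) auto
  also have "\<dots> = (\<Sum>k<n. if k = i then of_real (d ! i) * A $$ (i, j) else 0)"
    using assms by (intro sum.cong) auto
  finally show ?thesis using assms by simp
qed

lemma diag_real_mult:
  assumes "length a = n" "length b = n"
  shows "diag_real a * diag_real b = diag_real (map2 (*) a b)"
proof (rule eq_matI)
  fix i j assume "i < dim_row (diag_real (map2 (*) a b))" "j < dim_col (diag_real (map2 (*) a b))"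
  then show "(diag_real a * diag_real b) $$ (i, j) = diag_real (map2 (*) a b) $$ (i, j)"
    using assms index_diag_real_mult[of "diag_real b" n a i j] diag_real_carrier[of b]
    by (simp del: index_mult_mat)
qed (use assms in auto)

lemma unitary_carrier: "unitary_mat n U \<Longrightarrow> U \<in> carrier_mat n n"
  by (simp add: unitary_mat_def)

lemma unitary_adj: "unitary_mat n U \<Longrightarrow> unitary_mat n (adj U)"
  by (auto simp: unitary_mat_def)

lemma unitary_mult:
  assumes U: "unitary_mat n U" and V: "unitary_mat n V"
  shows "unitary_mat n (U * V)"
proof -
  have Uc: "U \<in> carrier_mat n n" "adj U \<in> carrier_mat n n"
    and Vc: "V \<in> carrier_mat n n" "adj V \<in> carrier_mat n n"
    using U V by (auto simp: unitary_mat_def)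
  have "U * V * adj (U * V) = U * (V * adj V) * adj U"
    using Uc Vc by (simp add: adj_mult assoc_mult_mat[of _ n n _ n _ n] mult_carrier_mat[of _ n n _ n])
  moreover have "adj (U * V) * (U * V) = adj V * (adj U * U) * V"
    using Uc Vc by (simp add: adj_mult assoc_mult_mat[of _ n n _ n _ n] mult_carrier_mat[of _ n n _ n])
  ultimately show ?thesis
    using U V Uc Vc by (simp add: unitary_mat_def)
qed

lemma unitary_rows_orthonormal:
  assumes "unitary_mat n U" "i < n" "j < n"
  shows "(\<Sum>k<n. U $$ (i, k) * cnj (U $$ (j, k))) = (if i = j then 1 else 0)"
proof -
  have "U \<in> carrier_mat n n" "U * adj U = 1\<^sub>m n" using assms by (auto simp: unitary_mat_def)
  then show ?thesis
    using index_mult_mat_sum[of U n n "adj U" n i j] assms by simp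
qed

lemma unitary_cols_orthonormal:
  assumes "unitary_mat n U" "i < n" "j < n"
  shows "(\<Sum>k<n. cnj (U $$ (k, i)) * U $$ (k, j)) = (if i = j then 1 else 0)"
proof -
  have "U \<in> carrier_mat n n" "adj U * U = 1\<^sub>m n" using assms by (auto simp: unitary_mat_def)
  then show ?thesis
    using index_mult_mat_sum[of "adj U" n n U n i j] assms by simp
qed

lemma unitary_row_norm:
  assumes "unitary_mat n U" "i < n"
  shows "(\<Sum>k<n. (cmod (U $$ (i, k)))\<^sup>2) = 1"
proof -
  have "complex_of_real (\<Sum>k<n. (cmod (U $$ (i, k)))\<^sup>2) = 1"
    using unitary_rows_orthonormal[OF assms assms(2)] by (simp add: of_real_cmod_square)
  then show ?thesis by (simp only: of_real_eq_1_iff)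
qed

lemma unitary_col_norm:
  assumes "unitary_mat n U" "j < n"
  shows "(\<Sum>k<n. (cmod (U $$ (k, j)))\<^sup>2) = 1"
proof -
  have "complex_of_real (\<Sum>k<n. (cmod (U $$ (k, j)))\<^sup>2) = 1"
    using unitary_cols_orthonormal[OF assms assms(2)] by (simp add: of_real_cmod_square mult.commute)
  then show ?thesis by (simp only: of_real_eq_1_iff)
qed

section \<open>Matrices given by a spectral decomposition\<close>

definition spectral :: "complex mat \<Rightarrow> real list \<Rightarrow> complex mat" where
  "spectral U d = U * diag_real d * adj U"

lemma spectral_dim [simp]: "dim_row (spectral U d) = dim_row U" "dim_col (spectral U d) = dim_row U"
  by (simp_all add: spectral_def)

lemma spectral_carrier [simp]: "U \<in> carrier_mat n n \<Longrightarrow> spectral U d \<in> carrier_mat n n"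
  by (metis carrier_matD(1) carrier_matI spectral_dim)

lemma index_spectral:
  assumes U: "U \<in> carrier_mat n n" and d: "length d = n" and "i < n" "j < n"
  shows "spectral U d $$ (i, j) = (\<Sum>k<n. U $$ (i, k) * of_real (d ! k) * cnj (U $$ (j, k)))"
proof -
  have "spectral U d $$ (i, j) = (\<Sum>k<n. (U * diag_real d) $$ (i, k) * adj U $$ (k, j))"
    unfolding spectral_def using assms by (intro index_mult_mat_sum) auto
  also have "\<dots> = (\<Sum>k<n. U $$ (i, k) * of_real (d ! k) * cnj (U $$ (j, k)))"
    using assms by (intro sum.cong) (auto simp: index_mult_diag_real simp del: index_mult_mat(1))
  finally show ?thesis .
qed

lemma adj_spectral:
  assumes "U \<in> carrier_mat n n" "length d = n"
  shows "adj (spectral U d) = spectral U d"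
  using assms by (intro eq_matI) (auto simp: index_spectral mult_ac)

lemma unitary_conj_spectral:
  assumes U: "unitary_mat n U" and d: "length d = n"
  shows "adj U * spectral U d * U = diag_real d"
proof -
  have Uc: "U \<in> carrier_mat n n" "adj U \<in> carrier_mat n n" and D: "diag_real d \<in> carrier_mat n n"
    using U d by (auto simp: unitary_mat_def)
  have "adj U * spectral U d * U = (adj U * U) * diag_real d * (adj U * U)"
    unfolding spectral_def using Uc D
    by (simp add: assoc_mult_mat[of _ n n _ n _ n] mult_carrier_mat[of _ n n _ n])
  then show ?thesis using U by (simp add: unitary_mat_def left_mult_one_mat[OF D] right_mult_one_mat[OF D])
qed

lemma unitary_mult_spectral:
  assumes W: "W \<in> carrier_mat n n" and U: "U \<in> carrier_mat n n" and d: "length d = n"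
  shows "W * spectral U d * adj W = spectral (W * U) d"
proof -
  have "diag_real d \<in> carrier_mat n n" using d by auto
  then show ?thesis
    using W U
      by (simp add: spectral_def adj_mult assoc_mult_mat[of _ n n _ n _ n] mult_carrier_mat[of _ n n _ n])
qed

lemma spectral_mult_same_basis:
  assumes U: "unitary_mat n U" and "length a = n" "length b = n"
  shows "spectral U a * spectral U b = spectral U (map2 (*) a b)"
proof -
  have Uc: "U \<in> carrier_mat n n" "adj U \<in> carrier_mat n n"
    and D: "diag_real a \<in> carrier_mat n n" "diag_real b \<in> carrier_mat n n"
    using assms by (auto simp: unitary_mat_def)
  have "spectral U a * spectral U b = U * diag_real a * (adj U * U) * diag_real b * adj U"
    unfolding spectral_def using Uc D
    by (simp add: assoc_mult_mat[of _ n n _ n _ n] mult_carrier_mat[of _ n n _ n])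
  also have "\<dots> = U * (diag_real a * diag_real b) * adj U"
    using U Uc D by (simp add: unitary_mat_def assoc_mult_mat[of _ n n _ n _ n] left_mult_one_mat[OF D(2)])
  finally show ?thesis using assms by (simp add: spectral_def diag_real_mult)
qed

lemma smult_spectral:
  assumes U: "U \<in> carrier_mat n n" and d: "length d = n"
  shows "complex_of_real c \<cdot>\<^sub>m spectral U d = spectral U (map ((*) c) d)"
  using assms by (intro eq_matI) (auto simp: index_spectral sum_distrib_left mult_ac)

lemma mtrace_spectral:
  assumes U: "unitary_mat n U" and d: "length d = n"
  shows "mtrace (spectral U d) = of_real (\<Sum>k<n. d ! k)"
proof -
  have Uc: "U \<in> carrier_mat n n" using U by (rule unitary_carrier)
  have "mtrace (spectral U d) = (\<Sum>i<n. \<Sum>k<n. U $$ (i, k) * of_real (d ! k) * cnj (U $$ (i, k)))"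
    unfolding mtrace_def using Uc d by (intro sum.cong) (auto simp: index_spectral)
  also have "\<dots> = (\<Sum>k<n. of_real (d ! k) * (\<Sum>i<n. cnj (U $$ (i, k)) * U $$ (i, k)))"
    by (subst sum.swap) (simp add: sum_distrib_left mult_ac)
  also have "\<dots> = (\<Sum>k<n. of_real (d ! k))"
    using unitary_cols_orthonormal[OF U] by simp
  finally show ?thesis by simp
qed

lemma spectral_quadratic_form_col:
  assumes U: "unitary_mat n U" and d: "length d = n" and m: "m < n"
  shows "conjugate (col U m) \<bullet> (spectral U d *\<^sub>v col U m) = of_real (d ! m)"
proof -
  have Uc: "U \<in> carrier_mat n n" "adj U \<in> carrier_mat n n" and S: "spectral U d \<in> carrier_mat n n"
    using U d by (auto simp: unitary_mat_def)
  have "conjugate (col U m) \<bullet> (spectral U d *\<^sub>v col U m) = (adj U * (spectral U d * U)) $$ (m, m)"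
    using Uc S m by (simp add: scalar_prod_def mult_mat_vec_def row_def col_def conjugate_vec_def)
  also have "\<dots> = diag_real d $$ (m, m)"
    using unitary_conj_spectral[OF U d] Uc S by (simp add: assoc_mult_mat[of _ n n _ n _ n])
  finally show ?thesis using m d by simp
qed

lemma mtrace_spectral_mult:
  assumes U: "unitary_mat n U" and W: "unitary_mat n W" and a: "length a = n" and b: "length b = n"
  shows "mtrace (spectral U a * spectral W b) =
    of_real (\<Sum>m<n. \<Sum>k<n. a ! m * b ! k * (cmod ((adj U * W) $$ (m, k)))\<^sup>2)"
proof -
  have Uc: "U \<in> carrier_mat n n" and Wc: "W \<in> carrier_mat n n"
    using U W by (auto simp: unitary_mat_def)
  have G: "(adj U * W) $$ (m, k) = (\<Sum>l<n. cnj (U $$ (l, m)) * W $$ (l, k))" if "m < n" "k < n" for m k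
    using that Uc Wc by (subst index_mult_mat_sum[of _ n n]) auto
  have "mtrace (spectral U a * spectral W b) =
      (\<Sum>i<n. \<Sum>l<n. spectral U a $$ (i, l) * spectral W b $$ (l, i))"
    unfolding mtrace_def using Uc Wc by (intro sum.cong refl index_mult_mat_sum[of _ n n]) auto
  also have "\<dots> = (\<Sum>i<n. \<Sum>l<n. \<Sum>m<n. \<Sum>k<n. of_real (a ! m * b ! k) *
      ((U $$ (i, m) * cnj (W $$ (i, k))) * (cnj (U $$ (l, m)) * W $$ (l, k))))"
    using Uc Wc a b by (intro sum.cong refl) (simp add: index_spectral sum_product mult_ac)
  also have "\<dots> = (\<Sum>m<n. \<Sum>k<n. of_real (a ! m * b ! k) *
      ((\<Sum>i<n. U $$ (i, m) * cnj (W $$ (i, k))) * (\<Sum>l<n. cnj (U $$ (l, m)) * W $$ (l, k))))"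
    by (subst sum_swap_pairs) (simp only: sum_product, simp add: sum_distrib_left mult_ac)
  also have "\<dots> = of_real (\<Sum>m<n. \<Sum>k<n. a ! m * b ! k * (cmod ((adj U * W) $$ (m, k)))\<^sup>2)"
    by (simp add: G of_real_cmod_square mult.commute)
  finally show ?thesis .
qed

lemma spectral_indicator_mult_spectral:
  assumes W: "unitary_mat n W" and U: "U \<in> carrier_mat n n" and t: "length t = n" and l: "length l = n"
    and orth: "\<And>k m. k < n \<Longrightarrow> m < n \<Longrightarrow> t ! k = 0 \<Longrightarrow> l ! m \<noteq> 0 \<Longrightarrow> (adj W * U) $$ (k, m) = 0"
  shows "spectral W (map (\<lambda>s. if s = 0 then 0 else 1) t) * spectral U l = spectral U l"
proof -
  define H where "H = adj W * U"
  define e where "e = map (\<lambda>s. if s = 0 then 0 else 1 :: real) t"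
  have Wc: "W \<in> carrier_mat n n" "adj W \<in> carrier_mat n n" using W by (auto simp: unitary_mat_def)
  have Hc: "H \<in> carrier_mat n n" unfolding H_def using Wc(2) U by (rule mult_carrier_mat)
  have D: "diag_real e \<in> carrier_mat n n" "diag_real l \<in> carrier_mat n n" using t l by (auto simp: e_def)
  have key: "diag_real e * (H * diag_real l) = H * diag_real l"
  proof (rule eq_matI)
    fix k m assume "k < dim_row (H * diag_real l)" "m < dim_col (H * diag_real l)"
    then have k: "k < n" and m: "m < n" using Hc l by auto
    show "(diag_real e * (H * diag_real l)) $$ (k, m) = (H * diag_real l) $$ (k, m)"
      using orth[OF k m] index_diag_real_mult[of "H * diag_real l" n e k m]
        index_mult_diag_real[OF Hc l k m] Hc D k m t
      by (auto simp: e_def H_def)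
  qed (use Hc D in auto)
  have "spectral W e * spectral U l = W * (diag_real e * (H * diag_real l)) * adj U"
    unfolding spectral_def H_def using Wc U D
    by (simp add: assoc_mult_mat[of _ n n _ n _ n] mult_carrier_mat[of _ n n _ n])
  also have "\<dots> = W * (H * diag_real l) * adj U"
    by (simp only: key)
  also have "\<dots> = (W * adj W) * U * diag_real l * adj U"
    unfolding H_def using Wc U D
    by (simp add: assoc_mult_mat[of _ n n _ n _ n] mult_carrier_mat[of _ n n _ n])
  also have "\<dots> = spectral U l"
    using W U by (simp add: unitary_mat_def spectral_def)
  finally show ?thesis by (simp add: e_def)
qed

lemma supp_spectral_subset:
  assumes W: "unitary_mat n W" and U: "U \<in> carrier_mat n n" and t: "length t = n" and l: "length l = n"
    and orth: "\<And>k m. k < n \<Longrightarrow> m < n \<Longrightarrow> t ! k = 0 \<Longrightarrow> l ! m \<noteq> 0 \<Longrightarrow> (adj W * U) $$ (k, m) = 0"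
  shows "supp n (spectral U l) \<subseteq> supp n (spectral W t)"
proof
  \<comment> \<open>spectral U l factors through spectral W t via the pseudo-inverse spectral W t'\<close>
  define t' where "t' = map (\<lambda>s. if s = 0 then 0 else 1 / s) t"
  have Wc: "W \<in> carrier_mat n n" using W by (rule unitary_carrier)
  have "map2 (*) t t' = map (\<lambda>s. if s = 0 then 0 else 1) t"
    unfolding t'_def by (induction t) auto
  then have tt': "spectral W t * spectral W t' = spectral W (map (\<lambda>s. if s = 0 then 0 else 1) t)"
    using spectral_mult_same_basis[OF W t, of t'] t by (simp add: t'_def)
  have "spectral U l = spectral W t * spectral W t' * spectral U l"
    unfolding tt' using spectral_indicator_mult_spectral[OF W U t l orth] by (rule sym)
  also have "\<dots> = spectral W t * (spectral W t' * spectral U l)"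
    using Wc U by (intro assoc_mult_mat) auto
  finally have factor: "spectral U l = spectral W t * (spectral W t' * spectral U l)" .
  fix w assume "w \<in> supp n (spectral U l)"
  then obtain v where v: "v \<in> carrier_vec n" and w: "w = spectral U l *\<^sub>v v" by (auto simp: supp_def)
  have "w = spectral W t *\<^sub>v ((spectral W t' * spectral U l) *\<^sub>v v)"
    unfolding w using Wc U v
    by (subst factor) (simp add: assoc_mult_mat_vec[of _ n n _ n] mult_carrier_mat[of _ n n _ n])
  moreover have "(spectral W t' * spectral U l) *\<^sub>v v \<in> carrier_vec n"
    using Wc U v by (metis mult_carrier_mat mult_mat_vec_carrier spectral_carrier)
  ultimately show "w \<in> supp n (spectral W t)" by (auto simp: supp_def)
qed

lemma diag_real_intertwine_map:
  assumes G: "G \<in> carrier_mat n n" and d: "length d = n" and d': "length d' = n"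
    and GD: "G * diag_real d = diag_real d' * G"
  shows "G * diag_real (map f d) = diag_real (map f d') * G"
proof (rule eq_matI)
  fix i j assume "i < dim_row (diag_real (map f d') * G)" "j < dim_col (diag_real (map f d') * G)"
  then have i: "i < n" and j: "j < n" using G d' by auto
  have "G $$ (i, j) * of_real (d ! j) = of_real (d' ! i) * G $$ (i, j)"
    using arg_cong[OF GD, of "\<lambda>M. M $$ (i, j)"] index_mult_diag_real[OF G d i j]
      index_diag_real_mult[OF G d' i j] by simp
  then have "G $$ (i, j) = 0 \<or> d ! j = d' ! i" by (auto simp: mult.commute)
  then show "(G * diag_real (map f d)) $$ (i, j) = (diag_real (map f d') * G) $$ (i, j)"
    using index_mult_diag_real[OF G _ i j, of "map f d"] index_diag_real_mult[OF G _ i j, of "map f d'"]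
      d d' i j by auto
qed (use G d d' in auto)

lemma spectral_eq_imp_spectral_map_eq:
  assumes U: "unitary_mat n U" and U': "unitary_mat n U'" and d: "length d = n" and d': "length d' = n"
    and eq: "spectral U d = spectral U' d'"
  shows "spectral U (map f d) = spectral U' (map f d')"
proof -
  define G where "G = adj U' * U"
  have Uc: "U \<in> carrier_mat n n" "adj U \<in> carrier_mat n n"
    and U'c: "U' \<in> carrier_mat n n" "adj U' \<in> carrier_mat n n"
    and Gc: "G \<in> carrier_mat n n" "adj G \<in> carrier_mat n n"
    using U U' by (auto simp: unitary_mat_def G_def)
  have G: "unitary_mat n G" unfolding G_def using U U' by (intro unitary_mult unitary_adj)
  have UG: "U = U' * G"
    using U' Uc U'c by (simp add: G_def unitary_mat_def flip: assoc_mult_mat[of U' n n "adj U'" n U n])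
  have conj: "spectral U x = U' * (G * diag_real x * adj G) * adj U'" if "length x = n" for x
    using unitary_mult_spectral[OF U'c(1) Gc(1) that] UG that Gc U'c
    by (simp add: spectral_def assoc_mult_mat[of _ n n _ n _ n] mult_carrier_mat[of _ n n _ n])
  have diag_conj: "G * diag_real x * adj G = diag_real x' \<longleftrightarrow> G * diag_real x = diag_real x' * G"
    if "length x = n" "length x' = n" for x x'
  proof -
    have D: "diag_real x \<in> carrier_mat n n" "diag_real x' \<in> carrier_mat n n" using that by auto
    have "G * diag_real x * adj G * G = G * diag_real x" and "diag_real x' * G * adj G = diag_real x'"
      using G Gc D that carrier_matD[OF Gc(1)]
      by (simp_all add: unitary_mat_def assoc_mult_mat[of _ n n _ n _ n] mult_carrier_mat[of _ n n _ n])
    then show ?thesis by metis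
  qed
  have "G * diag_real d * adj G = adj U' * spectral U d * U'"
    using Uc U'c d diag_real_carrier[of d]
    by (simp add: G_def spectral_def adj_mult[of _ n n _ n] assoc_mult_mat[of _ n n _ n _ n]
        mult_carrier_mat[of _ n n _ n])
  also have "\<dots> = diag_real d'"
    using eq unitary_conj_spectral[OF U' d'] by simp
  finally have "G * diag_real (map f d) = diag_real (map f d') * G"
    using diag_real_intertwine_map[OF Gc(1) d d'] diag_conj[OF d d'] by simp
  then have "G * diag_real (map f d) * adj G = diag_real (map f d')"
    using diag_conj[of "map f d" "map f d'"] d d' by simp
  then show ?thesis
    using conj[of "map f d"] d by (simp add: spectral_def)
qed

lemma mat_fun_spectral:
  assumes U: "unitary_mat n U" and d: "length d = n"
  shows "mat_fun n f (spectral U d) = spectral U (map f d)"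
proof -
  let ?P = "\<lambda>B. \<exists>U' d'. unitary_mat n U' \<and> length d' = n \<and>
    spectral U d = U' * diag_real d' * adj U' \<and> B = U' * diag_real (map f d') * adj U'"
  have "?P (spectral U (map f d))" using U d by (auto simp: spectral_def)
  then have "?P (mat_fun n f (spectral U d))" unfolding mat_fun_def by (rule someI)
  then obtain U' d' where "unitary_mat n U'" "length d' = n" "spectral U d = spectral U' d'"
    and "mat_fun n f (spectral U d) = spectral U' (map f d')"
    by (auto simp: spectral_def)
  then show ?thesis using spectral_eq_imp_spectral_map_eq[OF U _ d] by metis
qed

lemma mat_powr_spectral:
  "unitary_mat n U \<Longrightarrow> length d = n \<Longrightarrow> mat_powr n (spectral U d) p = spectral U (map (\<lambda>x. x powr p) d)"
  unfolding mat_powr_def by (rule mat_fun_spectral)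

section \<open>The spectral theorem for Hermitian matrices\<close>

lemma unitary_normalised_cols:
  assumes ws: "set ws \<subseteq> carrier_vec n" "corthogonal ws" "length ws = n"
  defines "r j \<equiv> Re (ws ! j \<bullet>c ws ! j)"
  shows "unitary_mat n (mat n n (\<lambda>(i, j). ws ! j $ i / of_real (sqrt (r j))))" (is "unitary_mat n ?W")
proof -
  have wsc: "ws ! j \<in> carrier_vec n" if "j < n" for j using ws that by auto
  have r: "ws ! j \<bullet>c ws ! j = of_real (r j)" "r j > 0" if "j < n" for j
  proof -
    have "ws ! j \<bullet>c ws ! j \<noteq> 0" using corthogonalD[OF ws(2), of j j] ws(3) that by auto
    moreover have "ws ! j \<bullet>c ws ! j \<ge> 0" by (rule conjugate_square_ge_0_vec)
    ultimately show "ws ! j \<bullet>c ws ! j = of_real (r j)" "r j > 0"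
      by (auto simp: r_def less_eq_complex_def complex_eq_iff)
  qed
  have Wc: "?W \<in> carrier_mat n n" by simp
  have "adj ?W * ?W = 1\<^sub>m n"
  proof (rule eq_matI)
    fix i j assume "i < dim_row (1\<^sub>m n)" "j < dim_col (1\<^sub>m n)"
    then have i: "i < n" and j: "j < n" by auto
    have "(adj ?W * ?W) $$ (i, j) = (\<Sum>k<n. adj ?W $$ (i, k) * ?W $$ (k, j))"
      using Wc i j by (intro index_mult_mat_sum) auto
    also have "\<dots> = (\<Sum>k<n. ws ! j $ k * cnj (ws ! i $ k)) / of_real (sqrt (r i) * sqrt (r j))"
      using i j by (simp add: sum_divide_distrib mult.commute)
    also have "(\<Sum>k<n. ws ! j $ k * cnj (ws ! i $ k)) = ws ! j \<bullet>c ws ! i"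
      using wsc[OF i] by (simp add: scalar_prod_def lessThan_atLeast0)
    finally show "(adj ?W * ?W) $$ (i, j) = 1\<^sub>m n $$ (i, j)"
      using corthogonalD[OF ws(2), of j i] ws(3) r[OF i] i j
      by (cases "i = j") (auto simp: real_sqrt_mult[symmetric])
  qed (use Wc in auto)
  then show ?thesis
    using mat_mult_left_right_inverse[of "adj ?W" n ?W] Wc by (simp add: unitary_mat_def)
qed

lemma unitary_with_first_column:
  assumes v: "v \<in> carrier_vec n" "v \<noteq> 0\<^sub>v n"
  obtains W c where "unitary_mat n W" "\<And>k. k < n \<Longrightarrow> W $$ (k, 0) = c * v $ k"
proof -
  interpret cof_vec_space n "TYPE(complex)" .
  define b where "b = basis_completion v"
  from basis_completion[OF v, folded b_def]
  have b: "distinct b" "\<not> lin_dep (set b)" "set b \<subseteq> carrier_vec n" "hd b = v" "length b = n"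
    by auto
  have n: "n > 0" using v by (cases n) auto
  then obtain vs where bv: "b = v # vs" using b(4,5) by (cases b) auto
  define ws where "ws = gram_schmidt n b"
  from gram_schmidt_result[OF b(3,1,2) ws_def]
  have ws: "set ws \<subseteq> carrier_vec n" "corthogonal ws" "length ws = n"
    by (auto simp: b(5))
  have "ws ! 0 = v"
    using gram_schmidt_hd[OF v(1), of vs] ws(3) n unfolding ws_def bv
    by (cases "gram_schmidt n (v # vs)") auto
  then show ?thesis
    using that[OF unitary_normalised_cols[OF ws], of "1 / of_real (sqrt (Re (v \<bullet>c v)))"] n by simp
qed

lemma adj_unitary_conj_hermitian:
  assumes "W \<in> carrier_mat n n" "A \<in> carrier_mat n n" "adj A = A"
  shows "adj (adj W * A * W) = adj W * A * W"
  using assms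
    by (simp add: adj_mult[of _ n n _ n] assoc_mult_mat[of _ n n _ n _ n] mult_carrier_mat[of _ n n _ n])

lemma unitary_conj_eigenvector_col:
  assumes W: "unitary_mat n W" and A: "A \<in> carrier_mat n n"
    and v: "v \<in> carrier_vec n" and Av: "A *\<^sub>v v = e \<cdot>\<^sub>v v"
    and Wcol: "\<And>k. k < n \<Longrightarrow> W $$ (k, 0) = c * v $ k" and i: "i < n"
  shows "(adj W * A * W) $$ (i, 0) = (if i = 0 then e else 0)"
proof -
  have Wc: "W \<in> carrier_mat n n" "adj W \<in> carrier_mat n n" using W by (auto simp: unitary_mat_def)
  have n: "0 < n" using i by simp
  have AW: "(A * W) $$ (k, 0) = e * W $$ (k, 0)" if k: "k < n" for k
  proof -
    have "(A * W) $$ (k, 0) = (\<Sum>l<n. A $$ (k, l) * W $$ (l, 0))"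
      using A Wc k n by (intro index_mult_mat_sum) auto
    also have "\<dots> = c * (\<Sum>l<n. A $$ (k, l) * v $ l)"
      by (simp add: Wcol sum_distrib_left mult_ac)
    also have "(\<Sum>l<n. A $$ (k, l) * v $ l) = (A *\<^sub>v v) $ k"
      using A v k by (simp add: scalar_prod_def lessThan_atLeast0)
    finally show ?thesis using Av k v Wcol[OF k] by simp
  qed
  have "adj W * A * W = adj W * (A * W)"
    using Wc(2) A Wc(1) by (rule assoc_mult_mat)
  also have "(adj W * (A * W)) $$ (i, 0) = (\<Sum>k<n. adj W $$ (i, k) * (A * W) $$ (k, 0))"
    using A Wc i n by (intro index_mult_mat_sum[of _ n n]) auto
  finally have "(adj W * A * W) $$ (i, 0) = (\<Sum>k<n. adj W $$ (i, k) * (A * W) $$ (k, 0))" .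
  also have "\<dots> = e * (\<Sum>k<n. cnj (W $$ (k, i)) * W $$ (k, 0))"
    using Wc i by (simp add: AW sum_distrib_left mult_ac)
  finally show ?thesis using unitary_cols_orthonormal[OF W i n] by simp
qed

lemma hermitian_deflation:
  assumes A: "A \<in> carrier_mat (Suc m) (Suc m)" and hA: "adj A = A"
  obtains W e where "unitary_mat (Suc m) W"
    "\<And>i. i < Suc m \<Longrightarrow> (adj W * A * W) $$ (i, 0) = (if i = 0 then of_real e else 0)"
    "\<And>j. j < Suc m \<Longrightarrow> (adj W * A * W) $$ (0, j) = (if j = 0 then of_real e else 0)"
proof -
  obtain e where "eigenvalue A e" using spectrum_non_empty[OF A] by (auto simp: spectrum_def)
  then obtain v where "eigenvector A v e" using find_eigenvector[OF A] by blast
  then have v: "v \<in> carrier_vec (Suc m)" "v \<noteq> 0\<^sub>v (Suc m)" and Av: "A *\<^sub>v v = e \<cdot>\<^sub>v v"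
    using A unfolding eigenvector_def by auto
  obtain W c where W: "unitary_mat (Suc m) W" and Wcol: "\<And>k. k < Suc m \<Longrightarrow> W $$ (k, 0) = c * v $ k"
    using unitary_with_first_column[OF v] by blast
  define B where "B = adj W * A * W"
  have Bc: "B \<in> carrier_mat (Suc m) (Suc m)"
    using unitary_carrier[OF W] A by (simp add: B_def mult_carrier_mat[of _ "Suc m" "Suc m"])
  have hB: "adj B = B"
    unfolding B_def using unitary_carrier[OF W] A hA by (rule adj_unitary_conj_hermitian)
  have col0: "B $$ (i, 0) = (if i = 0 then e else 0)" if "i < Suc m" for i
    unfolding B_def using W A v(1) Av Wcol that by (rule unitary_conj_eigenvector_col)
  have "cnj (B $$ (0, 0)) = B $$ (0, 0)"
    using arg_cong[OF hB, of "\<lambda>M. M $$ (0, 0)"] Bc by simp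
  then have e: "e = of_real (Re e)" using col0[of 0] by (simp add: complex_eq_iff)
  have "B $$ (0, j) = (if j = 0 then e else 0)" if "j < Suc m" for j
    using arg_cong[OF hB, of "\<lambda>M. M $$ (0, j)"] col0[OF that] Bc that e by auto
  then show ?thesis using that[of W "Re e"] W col0 e by (simp add: B_def)
qed

definition block_diag_one :: "complex mat \<Rightarrow> complex mat" where
  "block_diag_one U = mat (Suc (dim_row U)) (Suc (dim_row U))
     (\<lambda>(i, j). if i = 0 \<and> j = 0 then 1 else if i = 0 \<or> j = 0 then 0 else U $$ (i - 1, j - 1))"

lemma block_diag_one_carrier: "U \<in> carrier_mat m m \<Longrightarrow> block_diag_one U \<in> carrier_mat (Suc m) (Suc m)"
  by (simp add: block_diag_one_def)

lemma index_block_diag_one: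
  assumes "U \<in> carrier_mat m m"
  shows "block_diag_one U $$ (0, 0) = 1"
    "j < m \<Longrightarrow> block_diag_one U $$ (0, Suc j) = 0"
    "i < m \<Longrightarrow> block_diag_one U $$ (Suc i, 0) = 0"
    "i < m \<Longrightarrow> j < m \<Longrightarrow> block_diag_one U $$ (Suc i, Suc j) = U $$ (i, j)"
  using assms by (auto simp: block_diag_one_def)

lemma unitary_block_diag_one:
  assumes U: "unitary_mat m U"
  shows "unitary_mat (Suc m) (block_diag_one U)"
proof -
  have Uc: "U \<in> carrier_mat m m" using U by (rule unitary_carrier)
  let ?U1 = "block_diag_one U"
  have U1c: "?U1 \<in> carrier_mat (Suc m) (Suc m)" using Uc by (rule block_diag_one_carrier)
  have "?U1 * adj ?U1 = 1\<^sub>m (Suc m)"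
  proof (rule eq_matI)
    fix i j assume "i < dim_row (1\<^sub>m (Suc m))" "j < dim_col (1\<^sub>m (Suc m))"
    then have i: "i < Suc m" and j: "j < Suc m" by auto
    have "(?U1 * adj ?U1) $$ (i, j) = (\<Sum>k<Suc m. ?U1 $$ (i, k) * cnj (?U1 $$ (j, k)))"
      using U1c i j by (subst index_mult_mat_sum[of _ "Suc m" "Suc m"]) auto
    also have "\<dots> = ?U1 $$ (i, 0) * cnj (?U1 $$ (j, 0)) +
        (\<Sum>k<m. ?U1 $$ (i, Suc k) * cnj (?U1 $$ (j, Suc k)))"
      by (subst sum.lessThan_Suc_shift) simp
    also have "\<dots> = 1\<^sub>m (Suc m) $$ (i, j)"
    proof (cases i; cases j)
      fix i' j' assume ij: "i = Suc i'" "j = Suc j'"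
      then have "i' < m" "j' < m" using i j by auto
      then show ?thesis
        using unitary_rows_orthonormal[OF U, of i' j'] ij i j Uc by (simp add: index_block_diag_one)
    qed (use i j Uc in \<open>auto simp: index_block_diag_one\<close>)
    finally show "(?U1 * adj ?U1) $$ (i, j) = 1\<^sub>m (Suc m) $$ (i, j)" .
  qed (use U1c in auto)
  then show ?thesis
    using mat_mult_left_right_inverse[OF U1c, of "adj ?U1"] U1c by (simp add: unitary_mat_def)
qed

lemma index_spectral_block_diag_one:
  assumes U: "U \<in> carrier_mat m m" and d: "length d = m" and i: "i < Suc m" and j: "j < Suc m"
  shows "spectral (block_diag_one U) (e # d) $$ (i, j) =
    (if i = 0 \<and> j = 0 then of_real e else if i = 0 \<or> j = 0 then 0 else spectral U d $$ (i - 1, j - 1))"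
proof -
  let ?U1 = "block_diag_one U"
  have "spectral ?U1 (e # d) $$ (i, j) =
      (\<Sum>k<Suc m. ?U1 $$ (i, k) * of_real ((e # d) ! k) * cnj (?U1 $$ (j, k)))"
    using block_diag_one_carrier[OF U] d i j by (intro index_spectral) auto
  also have "\<dots> = ?U1 $$ (i, 0) * of_real e * cnj (?U1 $$ (j, 0)) +
      (\<Sum>k<m. ?U1 $$ (i, Suc k) * of_real (d ! k) * cnj (?U1 $$ (j, Suc k)))"
    by (subst sum.lessThan_Suc_shift) simp
  also have "\<dots> = (if i = 0 \<and> j = 0 then of_real e else if i = 0 \<or> j = 0 then 0
      else spectral U d $$ (i - 1, j - 1))"
  proof (cases i; cases j)
    fix i' j' assume ij: "i = Suc i'" "j = Suc j'"
    then have "i' < m" "j' < m" using i j by auto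
    then show ?thesis using ij U d by (simp add: index_block_diag_one index_spectral)
  qed (use i j U in \<open>auto simp: index_block_diag_one\<close>)
  finally show ?thesis .
qed

lemma spectral_block_diag_one_eqI:
  assumes B: "B \<in> carrier_mat (Suc m) (Suc m)" and U: "U \<in> carrier_mat m m" and d: "length d = m"
    and col0: "\<And>i. i < Suc m \<Longrightarrow> B $$ (i, 0) = (if i = 0 then of_real e else 0)"
    and row0: "\<And>j. j < Suc m \<Longrightarrow> B $$ (0, j) = (if j = 0 then of_real e else 0)"
    and lower: "mat m m (\<lambda>(i, j). B $$ (Suc i, Suc j)) = spectral U d"
  shows "B = spectral (block_diag_one U) (e # d)"
proof (rule eq_matI)
  fix i j assume "i < dim_row (spectral (block_diag_one U) (e # d))"
    "j < dim_col (spectral (block_diag_one U) (e # d))"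
  then have i: "i < Suc m" and j: "j < Suc m" using block_diag_one_carrier[OF U] by auto
  show "B $$ (i, j) = spectral (block_diag_one U) (e # d) $$ (i, j)"
    unfolding index_spectral_block_diag_one[OF U d i j]
    using col0[OF i] row0[OF j] i j arg_cong[OF lower, of "\<lambda>M. M $$ (i - 1, j - 1)"] by auto
qed (use B block_diag_one_carrier[OF U] in auto)

lemma unitary_conj_cancel:
  assumes W: "unitary_mat n W" and A: "A \<in> carrier_mat n n"
  shows "W * (adj W * A * W) * adj W = A"
proof -
  have Wc: "W \<in> carrier_mat n n" using W by (rule unitary_carrier)
  have "W * (adj W * A * W) * adj W = (W * adj W) * A * (W * adj W)"
    using Wc A by (simp add: assoc_mult_mat[of _ n n _ n _ n] mult_carrier_mat[of _ n n _ n])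
  then show ?thesis
    using W carrier_matD[OF A] by (simp add: unitary_mat_def)
qed

theorem hermitian_spectral_decomposition:
  assumes "A \<in> carrier_mat n n" "adj A = A"
  shows "\<exists>U d. unitary_mat n U \<and> length d = n \<and> A = spectral U d"
  using assms
proof (induction n arbitrary: A)
  case 0
  then have "A = spectral (1\<^sub>m 0) []" by (auto simp: spectral_def intro!: eq_matI)
  moreover have "unitary_mat 0 (1\<^sub>m 0)" by (auto simp: unitary_mat_def intro!: eq_matI)
  ultimately show ?case by auto
next
  case (Suc m)
  obtain W e where W: "unitary_mat (Suc m) W"
    and col0: "\<And>i. i < Suc m \<Longrightarrow> (adj W * A * W) $$ (i, 0) = (if i = 0 then of_real e else 0)"
    and row0: "\<And>j. j < Suc m \<Longrightarrow> (adj W * A * W) $$ (0, j) = (if j = 0 then of_real e else 0)"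
    using hermitian_deflation[OF Suc.prems] by blast
  define B where "B = adj W * A * W"
  have Wc: "W \<in> carrier_mat (Suc m) (Suc m)" using W by (rule unitary_carrier)
  have Bc: "B \<in> carrier_mat (Suc m) (Suc m)" using Wc Suc.prems
    by (simp add: B_def mult_carrier_mat[of _ "Suc m" "Suc m"])
  have hB: "adj B = B" unfolding B_def using Wc Suc.prems by (rule adj_unitary_conj_hermitian)
  define B' where "B' = mat m m (\<lambda>(i, j). B $$ (Suc i, Suc j))"
  have hB': "adj B' = B'"
  proof (rule eq_matI)
    fix i j assume "i < dim_row B'" "j < dim_col B'"
    then show "adj B' $$ (i, j) = B' $$ (i, j)"
      using arg_cong[OF hB, of "\<lambda>M. M $$ (Suc i, Suc j)"] Bc by (simp add: B'_def)
  qed (simp_all add: B'_def)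
  obtain U' d where U': "unitary_mat m U'" and d: "length d = m" and B': "B' = spectral U' d"
    using Suc.IH[of B'] hB' by (auto simp: B'_def)
  have U'c: "U' \<in> carrier_mat m m" using U' by (rule unitary_carrier)
  have "B = spectral (block_diag_one U') (e # d)"
    using Bc U'c d col0 row0 B' by (intro spectral_block_diag_one_eqI) (auto simp: B_def B'_def)
  then have "A = spectral (W * block_diag_one U') (e # d)"
    using unitary_conj_cancel[OF W Suc.prems(1)] d
      unitary_mult_spectral[OF Wc block_diag_one_carrier[OF U'c]]
    by (simp add: B_def)
  then show ?case
    using unitary_mult[OF W unitary_block_diag_one[OF U']] d
    by (intro exI[of _ "W * block_diag_one U'"] exI[of _ "e # d"]) simp
qed

lemma density_spectral_decomposition:
  assumes "density n \<rho>"
  obtains U lam where "unitary_mat n U" "length lam = n" "\<rho> = spectral U lam"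
    "\<And>m. m < n \<Longrightarrow> lam ! m \<ge> 0" "(\<Sum>m<n. lam ! m) = 1"
proof -
  have \<rho>: "\<rho> \<in> carrier_mat n n" "adj \<rho> = \<rho>" "mtrace \<rho> = 1"
    and psd: "\<And>v. v \<in> carrier_vec n \<Longrightarrow> 0 \<le> Re (conjugate v \<bullet> (\<rho> *\<^sub>v v))"
    using assms by (auto simp: density_def psd_def)
  obtain U lam where U: "unitary_mat n U" and lam: "length lam = n" and \<rho>_eq: "\<rho> = spectral U lam"
    using hermitian_spectral_decomposition[OF \<rho>(1,2)] by blast
  have "lam ! m \<ge> 0" if "m < n" for m
  proof -
    have "col U m \<in> carrier_vec n" using unitary_carrier[OF U] by (simp add: carrier_vecI)
    then show ?thesis using psd spectral_quadratic_form_col[OF U lam that] \<rho>_eq by fastforce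
  qed
  moreover have "(\<Sum>m<n. lam ! m) = 1"
    using \<rho>(3) mtrace_spectral[OF U lam] \<rho>_eq by (metis of_real_eq_1_iff)
  ultimately show ?thesis using that U lam \<rho>_eq by blast
qed

section \<open>The operators \<open>I_A \<otimes> X\<close> and the partial trace\<close>

lemma id_tensor_carrier [simp]: "id_tensor dA dB X \<in> carrier_mat (dA * dB) (dA * dB)"
  by (simp add: id_tensor_def)

lemma index_id_tensor:
  "k < dA * dB \<Longrightarrow> l < dA * dB \<Longrightarrow>
    id_tensor dA dB X $$ (k, l) = (if k div dB = l div dB then X $$ (k mod dB, l mod dB) else 0)"
  by (simp add: id_tensor_def)

lemma id_tensor_mult:
  assumes A: "A \<in> carrier_mat dB dB" and B: "B \<in> carrier_mat dB dB"
  shows "id_tensor dA dB (A * B) = id_tensor dA dB A * id_tensor dA dB B"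
proof (rule eq_matI)
  fix k l assume "k < dim_row (id_tensor dA dB A * id_tensor dA dB B)"
    "l < dim_col (id_tensor dA dB A * id_tensor dA dB B)"
  then have k: "k < dA * dB" and l: "l < dA * dB" by (auto simp: id_tensor_def)
  then have dB: "dB > 0" by (cases dB) auto
  have kA: "k div dB < dA" using k by (simp add: less_mult_imp_div_less)
  have "(id_tensor dA dB A * id_tensor dA dB B) $$ (k, l) =
      (\<Sum>m<dA * dB. id_tensor dA dB A $$ (k, m) * id_tensor dA dB B $$ (m, l))"
    using k l by (intro index_mult_mat_sum) auto
  also have "\<dots> = (\<Sum>m<dA * dB. if m div dB = k div dB then
      (if k div dB = l div dB then A $$ (k mod dB, m mod dB) * B $$ (m mod dB, l mod dB) else 0) else 0)"
    using k l by (intro sum.cong refl) (auto simp: index_id_tensor)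
  also have "\<dots> = (\<Sum>s<dB. if k div dB = l div dB then A $$ (k mod dB, s) * B $$ (s, l mod dB) else 0)"
    by (rule sum_lessThan_mult_block_select[OF kA, of dB
          "\<lambda>s. if k div dB = l div dB then A $$ (k mod dB, s) * B $$ (s, l mod dB) else 0"])
  also have "\<dots> = id_tensor dA dB (A * B) $$ (k, l)"
    using k l A B dB by (simp add: index_id_tensor index_mult_mat_sum[of _ dB dB] del: index_mult_mat(1))
  finally show "id_tensor dA dB (A * B) $$ (k, l) = (id_tensor dA dB A * id_tensor dA dB B) $$ (k, l)" ..
qed (auto simp: id_tensor_def)

lemma adj_id_tensor:
  assumes "A \<in> carrier_mat dB dB"
  shows "adj (id_tensor dA dB A) = id_tensor dA dB (adj A)"
proof (rule eq_matI)
  fix k l assume "k < dim_row (id_tensor dA dB (adj A))" "l < dim_col (id_tensor dA dB (adj A))"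
  then have k: "k < dA * dB" and l: "l < dA * dB" by (auto simp: id_tensor_def)
  have "dB > 0" using k by (cases dB) auto
  have "adj (id_tensor dA dB A) $$ (k, l) = cnj (id_tensor dA dB A $$ (l, k))"
    using k l by (simp add: id_tensor_def)
  then show "adj (id_tensor dA dB A) $$ (k, l) = id_tensor dA dB (adj A) $$ (k, l)"
    using k l assms \<open>dB > 0\<close> by (auto simp: index_id_tensor)
qed (auto simp: id_tensor_def)

lemma id_tensor_one:
  assumes "dB > 0"
  shows "id_tensor dA dB (1\<^sub>m dB) = 1\<^sub>m (dA * dB)"
proof (rule eq_matI)
  fix k l assume "k < dim_row (1\<^sub>m (dA * dB))" "l < dim_col (1\<^sub>m (dA * dB))"
  moreover note div_mod_eq_iff[of k dB l]
  ultimately show "id_tensor dA dB (1\<^sub>m dB) $$ (k, l) = 1\<^sub>m (dA * dB) $$ (k, l)"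
    using assms by (auto simp: index_id_tensor)
qed (auto simp: id_tensor_def)

lemma length_concat_replicate [simp]: "length (concat (replicate m t)) = m * length t"
  by (induction m) auto

lemma nth_concat_replicate:
  "k < m * length t \<Longrightarrow> concat (replicate m t) ! k = t ! (k mod length t)"
proof (induction m arbitrary: k)
  case (Suc m)
  then show ?case
    by (cases "k < length t") (auto simp: nth_append mod_if)
qed simp

lemma id_tensor_diag_real:
  assumes "length t = dB"
  shows "id_tensor dA dB (diag_real t) = diag_real (concat (replicate dA t))"
proof (rule eq_matI)
  fix k l assume "k < dim_row (diag_real (concat (replicate dA t)))"
    "l < dim_col (diag_real (concat (replicate dA t)))"
  then have k: "k < dA * dB" and l: "l < dA * dB" using assms by auto
  then have "k mod dB < dB" "l mod dB < dB" by (cases dB; simp)+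
  moreover note div_mod_eq_iff[of k dB l]
  ultimately show "id_tensor dA dB (diag_real t) $$ (k, l) = diag_real (concat (replicate dA t)) $$ (k, l)"
    using assms k l by (auto simp: index_id_tensor nth_concat_replicate)
qed (use assms in \<open>auto simp: id_tensor_def\<close>)

lemma unitary_id_tensor:
  assumes "unitary_mat dB V" "dB > 0"
  shows "unitary_mat (dA * dB) (id_tensor dA dB V)"
proof -
  have Vc: "V \<in> carrier_mat dB dB" "adj V \<in> carrier_mat dB dB"
    and "V * adj V = 1\<^sub>m dB" "adj V * V = 1\<^sub>m dB"
    using assms by (auto simp: unitary_mat_def)
  then show ?thesis
    unfolding unitary_mat_def
    using id_tensor_mult[OF Vc, of dA] id_tensor_mult[OF Vc(2,1), of dA] adj_id_tensor[OF Vc(1), of dA]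
      id_tensor_one[OF assms(2), of dA]
    by simp
qed

lemma id_tensor_spectral:
  assumes V: "V \<in> carrier_mat dB dB" and t: "length t = dB"
  shows "id_tensor dA dB (spectral V t) = spectral (id_tensor dA dB V) (concat (replicate dA t))"
proof -
  have D: "diag_real t \<in> carrier_mat dB dB" using t by auto
  show ?thesis unfolding spectral_def
    using id_tensor_mult[OF mult_carrier_mat[OF V D] adj_carrier[OF V], of dA]
      id_tensor_mult[OF V D, of dA]
      adj_id_tensor[OF V, of dA] id_tensor_diag_real[OF t, of dA]
    by simp
qed

lemma ptrace_A_carrier: "ptrace_A dA dB Y \<in> carrier_mat dB dB"
  by (simp add: ptrace_A_def)

lemma adj_ptrace_A:
  assumes Y: "Y \<in> carrier_mat (dA * dB) (dA * dB)"
  shows "adj (ptrace_A dA dB Y) = ptrace_A dA dB (adj Y)"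
  using Y by (intro eq_matI) (auto simp: ptrace_A_def block_index_less)

lemma weighted_am_gm:
  fixes a b q :: real
  assumes "0 \<le> a" "0 \<le> b" "0 \<le> q" "q \<le> 1"
  shows "a powr q * b powr (1 - q) \<le> q * a + (1 - q) * b"
  using Youngs_inequality_0[of q "1 - q" a b] assms by (cases "a = 0 \<or> b = 0") auto

lemma sum_mult_powr_le:
  fixes c y :: "'i \<Rightarrow> real"
  assumes S: "finite S" and c: "\<And>i. i \<in> S \<Longrightarrow> c i \<ge> 0" and y: "\<And>i. i \<in> S \<Longrightarrow> y i \<ge> 0"
    and p: "0 < p" "p \<le> 1"
  shows "(\<Sum>i\<in>S. c i * y i powr p) \<le> (\<Sum>i\<in>S. c i) powr (1 - p) * (\<Sum>i\<in>S. c i * y i) powr p"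
proof -
  define C where "C = (\<Sum>i\<in>S. c i)"
  define M where "M = (\<Sum>i\<in>S. c i * y i)"
  have M0: "M \<ge> 0" using c y by (simp add: M_def sum_nonneg)
  show ?thesis
  proof (cases "M = 0")
    case True
    then have "\<forall>i\<in>S. c i * y i = 0"
      using c y S unfolding M_def by (subst (asm) sum_nonneg_eq_0_iff) auto
    then have "\<forall>i\<in>S. c i * y i powr p = 0" using p by auto
    then show ?thesis using True by (simp add: M_def)
  next
    case False
    then have Mp: "M > 0" using M0 by simp
    have Cp: "C > 0"
    proof (rule ccontr)
      assume "\<not> C > 0"
      moreover have "C \<ge> 0" using c by (simp add: C_def sum_nonneg)
      ultimately have "C = 0" by simp
      then have "\<forall>i\<in>S. c i = 0" using c S unfolding C_def by (subst (asm) sum_nonneg_eq_0_iff) auto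
      then show False using Mp by (simp add: M_def)
    qed
    define r where "r = M / C"
    have rp: "r > 0" using Mp Cp by (simp add: r_def)
    \<comment> \<open>AM-GM against the mean r, y^p r^(1-p) \<le> p y + (1 - p) r, averaged with the weights c\<close>
    have "(\<Sum>i\<in>S. c i * y i powr p) * r powr (1 - p) = (\<Sum>i\<in>S. c i * (y i powr p * r powr (1 - p)))"
      by (simp add: sum_distrib_left sum_distrib_right mult_ac)
    also have "\<dots> \<le> (\<Sum>i\<in>S. c i * (p * y i + (1 - p) * r))"
      using weighted_am_gm[of _ r p] y rp p c by (intro sum_mono mult_left_mono) auto
    also have "\<dots> = p * M + (1 - p) * r * C"
      by (simp add: M_def C_def distrib_left sum.distrib sum_distrib_left sum_distrib_right mult_ac)
    also have "\<dots> = M" using Cp by (simp add: r_def field_simps)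
    finally have "(\<Sum>i\<in>S. c i * y i powr p) \<le> M / r powr (1 - p)"
      using rp by (simp add: pos_le_divide_eq)
    also have "M / r powr (1 - p) = C powr (1 - p) * M powr p"
      using Mp Cp by (simp add: r_def powr_divide powr_diff field_simps)
    finally show ?thesis by (simp add: C_def M_def)
  qed
qed

lemma three_halves_am_gm:
  fixes l x \<alpha> :: real
  assumes "l \<ge> 0" "x > 0" "1/2 \<le> \<alpha>" "\<alpha> \<le> 1"
  shows "l powr (3/2) * x powr (- (1 / (2 * \<alpha>))) \<le>
    1 / (2 * \<alpha>) * l * (l powr \<alpha> / x) + (1 - 1 / (2 * \<alpha>)) * l"
proof -
  define q where "q = 1 / (2 * \<alpha>)"
  have q: "0 \<le> q" "q \<le> 1" using assms by (auto simp: q_def)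
  have "(1 + \<alpha>) * q + (1 - q) = 3/2" using assms by (simp add: q_def field_simps)
  then have "l powr ((1 + \<alpha>) * q) * l powr (1 - q) = l powr (3/2)" by (metis powr_add)
  then have "(l powr (1 + \<alpha>) / x) powr q * l powr (1 - q) = l powr (3/2) * x powr (- q)"
    using assms by (simp add: powr_divide powr_powr powr_minus_divide)
  moreover have "l powr (1 + \<alpha>) = l * l powr \<alpha>"
    using assms by (cases "l = 0") (simp_all add: powr_add)
  ultimately show ?thesis
    using weighted_am_gm[of "l powr (1 + \<alpha>) / x" l q] assms q by (simp add: q_def)
qed

section \<open>Partial trace of a positive operator in adapted eigenbases\<close>

locale ptrace_eigenbasis =
  fixes dA dB :: nat and U V :: "complex mat" and \<mu> x :: "real list"
  assumes U: "unitary_mat (dA * dB) U" and length_mu: "length \<mu> = dA * dB"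
    and mu_nonneg: "\<And>m. m < dA * dB \<Longrightarrow> \<mu> ! m \<ge> 0"
    and V: "unitary_mat dB V" and length_x: "length x = dB"
    and ptrace_eq: "ptrace_A dA dB (spectral U \<mu>) = spectral V x"
    and dB_pos: "dB > 0"
begin

lemma U_carrier: "U \<in> carrier_mat (dA * dB) (dA * dB)"
  using U by (rule unitary_carrier)

lemma V_carrier: "V \<in> carrier_mat dB dB"
  using V by (rule unitary_carrier)

text \<open>overlap m a j = \<langle>u_m | e_a \<otimes> v_j\<rangle> for the eigenvectors u_m of Y = spectral U \<mu> and v_j of tr_A Y.\<close>

definition overlap :: "nat \<Rightarrow> nat \<Rightarrow> nat \<Rightarrow> complex" where
  "overlap m a j = (adj U * id_tensor dA dB V) $$ (m, a * dB + j)"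

lemma unitary_overlap_mat: "unitary_mat (dA * dB) (adj U * id_tensor dA dB V)"
  by (intro unitary_mult unitary_adj U unitary_id_tensor V dB_pos)

lemma overlap_eq_sum:
  assumes m: "m < dA * dB" and a: "a < dA" and j: "j < dB"
  shows "overlap m a j = (\<Sum>s<dB. cnj (U $$ (a * dB + s, m)) * V $$ (s, j))"
proof -
  have aj: "a * dB + j < dA * dB" using a j by (rule block_index_less)
  have "overlap m a j = (\<Sum>k<dA * dB. adj U $$ (m, k) * id_tensor dA dB V $$ (k, a * dB + j))"
    unfolding overlap_def using U_carrier m aj by (intro index_mult_mat_sum) auto
  also have "\<dots> = (\<Sum>k<dA * dB. if k div dB = a
      then cnj (U $$ (k div dB * dB + k mod dB, m)) * V $$ (k mod dB, j) else 0)"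
    using U_carrier m aj j by (intro sum.cong refl) (auto simp: index_id_tensor)
  also have "\<dots> = (\<Sum>s<dB. cnj (U $$ (a * dB + s, m)) * V $$ (s, j))"
    using sum_lessThan_mult_block_select[OF a, of dB "\<lambda>s. cnj (U $$ (a * dB + s, m)) * V $$ (s, j)"]
    by (simp cong: if_cong)
  finally show ?thesis .
qed

lemma overlap_row_norm:
  assumes "m < dA * dB"
  shows "(\<Sum>a<dA. \<Sum>j<dB. (cmod (overlap m a j))\<^sup>2) = 1"
  using unitary_row_norm[OF unitary_overlap_mat assms]
  by (simp add: sum_lessThan_mult_blocks overlap_def)

lemma overlap_col_norm:
  assumes "a < dA" "j < dB"
  shows "(\<Sum>m<dA * dB. (cmod (overlap m a j))\<^sup>2) = 1"
  using unitary_col_norm[OF unitary_overlap_mat block_index_less[OF assms]]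
  by (simp add: overlap_def)

lemma ptrace_eigenbasis_entry:
  assumes p: "p < dB" and q: "q < dB"
  shows "(adj V * ptrace_A dA dB (spectral U \<mu>) * V) $$ (p, q) =
    (\<Sum>a<dA. \<Sum>m<dA * dB. of_real (\<mu> ! m) * (cnj (overlap m a p) * overlap m a q))"
proof -
  let ?X = "ptrace_A dA dB (spectral U \<mu>)"
  have X: "?X \<in> carrier_mat dB dB" by (rule ptrace_A_carrier)
  have X_entry: "?X $$ (r, s) = (\<Sum>a<dA. \<Sum>m<dA * dB.
      U $$ (a * dB + r, m) * of_real (\<mu> ! m) * cnj (U $$ (a * dB + s, m)))" if "r < dB" "s < dB" for r s
    using that U_carrier length_mu by (simp add: ptrace_A_def index_spectral block_index_less)
  have "(adj V * ?X * V) $$ (p, q) = (\<Sum>s<dB. (\<Sum>r<dB. cnj (V $$ (r, p)) * ?X $$ (r, s)) * V $$ (s, q))"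
    using V_carrier X p q
    by (simp add: index_mult_mat_sum[of _ dB dB] mult_carrier_mat[of _ dB dB] del: index_mult_mat(1))
  also have "\<dots> = (\<Sum>s<dB. \<Sum>r<dB. \<Sum>a<dA. \<Sum>m<dA * dB. of_real (\<mu> ! m) *
      (cnj (cnj (U $$ (a * dB + r, m)) * V $$ (r, p)) * (cnj (U $$ (a * dB + s, m)) * V $$ (s, q))))"
    by (intro sum.cong refl) (simp add: X_entry sum_distrib_left sum_distrib_right mult_ac)
  also have "\<dots> = (\<Sum>a<dA. \<Sum>m<dA * dB. \<Sum>s<dB. \<Sum>r<dB. of_real (\<mu> ! m) *
      (cnj (cnj (U $$ (a * dB + r, m)) * V $$ (r, p)) * (cnj (U $$ (a * dB + s, m)) * V $$ (s, q))))"
    by (rule sum_swap_pairs)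
  also have "\<dots> = (\<Sum>a<dA. \<Sum>m<dA * dB. of_real (\<mu> ! m) * (cnj (overlap m a p) * overlap m a q))"
    using p q by (intro sum.cong refl, subst sum.swap)
      (simp add: overlap_eq_sum cnj_sum sum_product, simp add: sum_distrib_left mult_ac)
  finally show ?thesis .
qed

lemma ptrace_quadratic_form:
  "(\<Sum>j<dB. x ! j * (cmod (y j))\<^sup>2) =
    (\<Sum>a<dA. \<Sum>m<dA * dB. \<mu> ! m * (cmod (\<Sum>j<dB. overlap m a j * y j))\<^sup>2)"
proof -
  let ?M = "adj V * ptrace_A dA dB (spectral U \<mu>) * V"
  have M: "?M = diag_real x"
    using unitary_conj_spectral[OF V length_x] ptrace_eq by simp
  have "(\<Sum>p<dB. \<Sum>q<dB. cnj (y p) * ?M $$ (p, q) * y q) =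
      (\<Sum>p<dB. \<Sum>q<dB. if q = p then cnj (y p) * of_real (x ! p) * y p else 0)"
    unfolding M using length_x by (intro sum.cong refl) auto
  then have "complex_of_real (\<Sum>j<dB. x ! j * (cmod (y j))\<^sup>2) =
      (\<Sum>p<dB. \<Sum>q<dB. cnj (y p) * ?M $$ (p, q) * y q)"
    by (simp add: of_real_cmod_square mult_ac)
  also have "\<dots> = (\<Sum>p<dB. \<Sum>q<dB. \<Sum>a<dA. \<Sum>m<dA * dB.
      of_real (\<mu> ! m) * (cnj (overlap m a p * y p) * (overlap m a q * y q)))"
    by (intro sum.cong refl) (simp add: ptrace_eigenbasis_entry sum_distrib_left sum_distrib_right mult_ac)
  also have "\<dots> = (\<Sum>a<dA. \<Sum>m<dA * dB. \<Sum>p<dB. \<Sum>q<dB.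
      of_real (\<mu> ! m) * (cnj (overlap m a p * y p) * (overlap m a q * y q)))"
    by (rule sum_swap_pairs)
  also have "\<dots> = complex_of_real (\<Sum>a<dA. \<Sum>m<dA * dB. \<mu> ! m * (cmod (\<Sum>j<dB. overlap m a j * y j))\<^sup>2)"
    by (simp add: of_real_cmod_square cnj_sum sum_product sum_distrib_left mult.commute)
  finally show ?thesis by (simp only: of_real_eq_iff)
qed

lemma eigenvalue_ptrace:
  assumes "j < dB"
  shows "x ! j = (\<Sum>a<dA. \<Sum>m<dA * dB. \<mu> ! m * (cmod (overlap m a j))\<^sup>2)"
proof -
  have "(\<Sum>i<dB. x ! i * (cmod (if i = j then 1 else 0))\<^sup>2) = (\<Sum>i<dB. if i = j then x ! i else 0)"
    by (intro sum.cong) auto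
  moreover have "(\<Sum>i<dB. f i * (if i = j then 1 else 0)) = (\<Sum>i<dB. if i = j then f i else 0)"
    for f :: "nat \<Rightarrow> complex" by (intro sum.cong) auto
  ultimately show ?thesis
    using ptrace_quadratic_form[of "\<lambda>i. if i = j then 1 else 0"] assms by simp
qed

lemma x_nonneg: "j < dB \<Longrightarrow> x ! j \<ge> 0"
  unfolding eigenvalue_ptrace using mu_nonneg by (auto intro!: sum_nonneg)

lemma sum_x_eq_sum_mu: "(\<Sum>j<dB. x ! j) = (\<Sum>m<dA * dB. \<mu> ! m)"
proof -
  have "(\<Sum>j<dB. x ! j) = (\<Sum>j<dB. \<Sum>a<dA. \<Sum>m<dA * dB. \<mu> ! m * (cmod (overlap m a j))\<^sup>2)"
    by (simp add: eigenvalue_ptrace)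
  also have "\<dots> = (\<Sum>m<dA * dB. \<mu> ! m * (\<Sum>a<dA. \<Sum>j<dB. (cmod (overlap m a j))\<^sup>2))"
    by (simp add: sum_distrib_left sum.swap[of _ "{..<dB}"] sum.swap[of _ "{..<dA}" "{..<dA * dB}"])
  also have "\<dots> = (\<Sum>m<dA * dB. \<mu> ! m)"
    by (simp add: overlap_row_norm)
  finally show ?thesis .
qed

lemma overlap_eq_0:
  assumes j: "j < dB" and x: "x ! j = 0" and m: "m < dA * dB" and mu: "\<mu> ! m > 0" and a: "a < dA"
  shows "overlap m a j = 0"
proof -
  have "(\<Sum>a<dA. \<Sum>m<dA * dB. \<mu> ! m * (cmod (overlap m a j))\<^sup>2) = 0"
    using x eigenvalue_ptrace[OF j] by simp
  then have "(\<Sum>m<dA * dB. \<mu> ! m * (cmod (overlap m a j))\<^sup>2) = 0"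
    using a mu_nonneg by (subst (asm) sum_nonneg_eq_0_iff) (auto intro!: sum_nonneg)
  then have "\<mu> ! m * (cmod (overlap m a j))\<^sup>2 = 0"
    using m mu_nonneg by (subst (asm) sum_nonneg_eq_0_iff) auto
  then show ?thesis using mu by simp
qed

text \<open>The operator inequality \<mu>_m (\<langle>a| \<otimes> I) |u_m\<rangle>\<langle>u_m| (|a\<rangle> \<otimes> I) \<le> tr_A Y, tested against the
  pseudo-inverse of tr_A Y.\<close>

lemma ptrace_pinv_bound:
  assumes m: "m < dA * dB" and a: "a < dA"
  shows "\<mu> ! m * (\<Sum>j<dB. if x ! j > 0 then (cmod (overlap m a j))\<^sup>2 / x ! j else 0) \<le> 1"
proof -
  define s where "s = (\<Sum>j<dB. if x ! j > 0 then (cmod (overlap m a j))\<^sup>2 / x ! j else 0)"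
  define y where "y j = (if x ! j > 0 then cnj (overlap m a j) / of_real (x ! j) else 0)" for j
  have s0: "s \<ge> 0" unfolding s_def by (intro sum_nonneg) auto
  have x_s: "(\<Sum>j<dB. x ! j * (cmod (y j))\<^sup>2) = s"
    unfolding s_def by (intro sum.cong refl) (auto simp: y_def norm_divide power_divide power2_eq_square)
  have overlap_s: "(\<Sum>j<dB. overlap m a j * y j) = of_real s"
    unfolding s_def of_real_sum by (intro sum.cong refl) (auto simp: y_def of_real_cmod_square)
  define q where "q a m = \<mu> ! m * (cmod (\<Sum>j<dB. overlap m a j * y j))\<^sup>2" for a m
  have "q a m \<le> (\<Sum>m<dA * dB. q a m)"
    using m mu_nonneg by (intro member_le_sum) (auto simp: q_def)
  also have "\<dots> \<le> (\<Sum>a<dA. \<Sum>m<dA * dB. q a m)"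
    using a mu_nonneg by (intro member_le_sum[of a "{..<dA}" "\<lambda>a. \<Sum>m<dA * dB. q a m"])
      (auto simp: q_def intro!: sum_nonneg)
  finally have "\<mu> ! m * s\<^sup>2 \<le> s"
    using ptrace_quadratic_form[of y] x_s overlap_s by (simp add: q_def)
  then show ?thesis using s0 mu_nonneg[OF m]
    by (cases "s = 0") (auto simp: s_def power2_eq_square mult.assoc[symmetric])
qed

end

section \<open>The bound for the Petz-optimal marginal\<close>

text \<open>Here \<rho> = spectral U lam and Y = \<rho>^\<alpha>, and \<sigma> = spectral V tau is (tr_A \<rho>^\<alpha>)^(1/\<alpha>), normalised.\<close>

locale petz_optimal_marginal = ptrace_eigenbasis +
  fixes lam :: "real list" and \<alpha> :: real
  assumes length_lam: "length lam = dA * dB"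
    and lam_nonneg: "\<And>m. m < dA * dB \<Longrightarrow> lam ! m \<ge> 0"
    and sum_lam: "(\<Sum>m<dA * dB. lam ! m) = 1"
    and mu_eq: "\<mu> = map (\<lambda>l. l powr \<alpha>) lam"
    and alpha_ge: "1/2 \<le> \<alpha>" and alpha_le: "\<alpha> \<le> 1"
begin

lemma mu_nth: "m < dA * dB \<Longrightarrow> \<mu> ! m = lam ! m powr \<alpha>"
  using length_lam by (simp add: mu_eq)

lemma alpha_pos: "\<alpha> > 0"
  using alpha_ge by simp

lemma lam_pos_ex:
  obtains m where "m < dA * dB" "lam ! m > 0"
proof (rule ccontr)
  assume "\<not> thesis"
  then have "\<forall>m\<in>{..<dA * dB}. lam ! m \<le> 0" using that by force
  then have "(\<Sum>m<dA * dB. lam ! m) \<le> 0" by (intro sum_nonpos) auto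
  then show False using sum_lam by simp
qed

lemma dA_ge_1: "real dA \<ge> 1"
proof -
  obtain m where "m < dA * dB" by (rule lam_pos_ex)
  then show ?thesis by (cases dA) auto
qed

lemma x_le:
  assumes j: "j < dB"
  shows "x ! j \<le> real dA powr (1 - \<alpha>) * (\<Sum>a<dA. \<Sum>m<dA * dB. (cmod (overlap m a j))\<^sup>2 * lam ! m) powr \<alpha>"
proof -
  let ?S = "{..<dA} \<times> {..<dA * dB}"
  let ?c = "\<lambda>(a, m). (cmod (overlap m a j))\<^sup>2"
  let ?y = "\<lambda>(a, m). lam ! m"
  have "x ! j = (\<Sum>i\<in>?S. ?c i * ?y i powr \<alpha>)"
    unfolding eigenvalue_ptrace[OF j] sum.cartesian_product
    by (intro sum.cong refl) (auto simp: mu_nth mult.commute)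
  also have "\<dots> \<le> (\<Sum>i\<in>?S. ?c i) powr (1 - \<alpha>) * (\<Sum>i\<in>?S. ?c i * ?y i) powr \<alpha>"
    using alpha_pos alpha_le lam_nonneg by (intro sum_mult_powr_le) auto
  also have "(\<Sum>i\<in>?S. ?c i) = real dA"
    using overlap_col_norm j by (simp add: sum.cartesian_product')
  finally show ?thesis by (simp add: sum.cartesian_product')
qed

definition Z :: real where
  "Z = (\<Sum>j<dB. x ! j powr (1 / \<alpha>))"

lemma Z_le_dA: "Z \<le> real dA"
proof -
  define P where "P j = (\<Sum>a<dA. \<Sum>m<dA * dB. (cmod (overlap m a j))\<^sup>2 * lam ! m)" for j
  have P0: "P j \<ge> 0" for j unfolding P_def using lam_nonneg by (auto intro!: sum_nonneg)
  have "x ! j powr (1 / \<alpha>) \<le> (real dA powr (1 - \<alpha>) * P j powr \<alpha>) powr (1 / \<alpha>)" if "j < dB" for j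
    using x_le[OF that] x_nonneg[OF that] alpha_pos by (intro powr_mono2) (auto simp: P_def)
  also have "(real dA powr (1 - \<alpha>) * P j powr \<alpha>) powr (1 / \<alpha>) = real dA powr ((1 - \<alpha>) / \<alpha>) * P j" for j
    using alpha_pos P0[of j] by (simp add: powr_mult powr_powr)
  finally have Z_le: "Z \<le> (\<Sum>j<dB. real dA powr ((1 - \<alpha>) / \<alpha>) * P j)"
    unfolding Z_def by (intro sum_mono) auto
  have "(\<Sum>j<dB. P j) = (\<Sum>m<dA * dB. lam ! m * (\<Sum>a<dA. \<Sum>j<dB. (cmod (overlap m a j))\<^sup>2))"
    unfolding P_def
    by (simp add: sum_distrib_left sum.swap[of _ "{..<dB}"] sum.swap[of _ "{..<dA}" "{..<dA * dB}"]
        mult.commute)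
  also have "\<dots> = 1"
    using sum_lam by (simp add: overlap_row_norm)
  finally have "(\<Sum>j<dB. real dA powr ((1 - \<alpha>) / \<alpha>) * P j) = real dA powr ((1 - \<alpha>) / \<alpha>)"
    by (simp add: sum_distrib_left[symmetric])
  also have "\<dots> \<le> real dA powr 1"
    using dA_ge_1 alpha_pos alpha_ge by (intro powr_mono) (auto simp: field_simps)
  finally show ?thesis using Z_le dA_ge_1 by simp
qed

lemma Z_pos: "Z > 0"
proof -
  obtain m where m: "m < dA * dB" and "lam ! m > 0" by (rule lam_pos_ex)
  then have "(\<Sum>m<dA * dB. \<mu> ! m) > 0"
    using mu_nonneg by (intro sum_pos2[of _ m]) (auto simp: mu_nth)
  then have "(\<Sum>j<dB. x ! j) > 0" by (simp add: sum_x_eq_sum_mu)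
  then obtain j where j: "j < dB" and "x ! j > 0"
    using x_nonneg by (metis (no_types, lifting) lessThan_iff not_less sum_nonpos)
  then show ?thesis
    unfolding Z_def using x_nonneg by (intro sum_pos2[of _ j]) auto
qed

definition tau :: "real list" where
  "tau = map (\<lambda>y. y powr (1 / \<alpha>) / Z) x"

lemma length_tau: "length tau = dB"
  by (simp add: tau_def length_x)

lemma tau_nth: "j < dB \<Longrightarrow> tau ! j = x ! j powr (1 / \<alpha>) / Z"
  by (simp add: tau_def length_x)

lemma normalised_marginal:
  "(1 / mtrace (spectral V (map (\<lambda>y. y powr (1 / \<alpha>)) x))) \<cdot>\<^sub>m spectral V (map (\<lambda>y. y powr (1 / \<alpha>)) x)
    = spectral V tau"
proof -
  have "mtrace (spectral V (map (\<lambda>y. y powr (1 / \<alpha>)) x)) = of_real Z"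
    using mtrace_spectral[OF V] length_x by (simp add: Z_def)
  then show ?thesis
    using smult_spectral[OF V_carrier, of _ "1 / Z"] length_x by (simp add: tau_def o_def)
qed

lemma tau_eq_0_iff: "j < dB \<Longrightarrow> tau ! j = 0 \<longleftrightarrow> x ! j = 0"
  using Z_pos by (simp add: tau_nth)

lemma tau_powr_neg_half:
  assumes j: "j < dB"
  shows "tau ! j powr (- (1/2)) = (if x ! j > 0 then sqrt Z * x ! j powr (- (1 / (2 * \<alpha>))) else 0)"
proof (cases "x ! j > 0")
  case True
  have "tau ! j powr (- (1/2)) = (x ! j powr (1 / \<alpha>)) powr (- (1/2)) / Z powr (- (1/2))"
    using True Z_pos by (simp add: tau_nth[OF j] powr_divide)
  also have "\<dots> = sqrt Z * x ! j powr (- (1 / (2 * \<alpha>)))"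
    using Z_pos by (simp add: powr_powr powr_minus_divide powr_half_sqrt mult.commute)
  finally show ?thesis using True by simp
qed (use x_nonneg[OF j] tau_nth[OF j] in auto)

definition trace_term :: real where
  "trace_term = (\<Sum>m<dA * dB. \<Sum>a<dA. \<Sum>j<dB.
     lam ! m powr (3/2) * tau ! j powr (- (1/2)) * (cmod (overlap m a j))\<^sup>2)"

lemma trace_term_eq:
  "trace_term = sqrt Z * (\<Sum>m<dA * dB. \<Sum>a<dA. \<Sum>j<dB.
     if x ! j > 0 then lam ! m powr (3/2) * x ! j powr (- (1 / (2 * \<alpha>))) * (cmod (overlap m a j))\<^sup>2
     else 0)"
  unfolding trace_term_def sum_distrib_left by (intro sum.cong refl) (auto simp: tau_powr_neg_half)

lemma block_sum_le:
  assumes m: "m < dA * dB"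
  shows "(\<Sum>a<dA. \<Sum>j<dB. if x ! j > 0 then
      lam ! m powr (3/2) * x ! j powr (- (1 / (2 * \<alpha>))) * (cmod (overlap m a j))\<^sup>2 else 0)
    \<le> (1 / (2 * \<alpha>) * real dA + (1 - 1 / (2 * \<alpha>))) * lam ! m"
proof -
  define q where "q = 1 / (2 * \<alpha>)"
  define l where "l = lam ! m"
  define c where "c a j = (cmod (overlap m a j))\<^sup>2" for a j
  have q: "0 \<le> q" "q \<le> 1" using alpha_ge by (auto simp: q_def)
  have l: "l \<ge> 0" using lam_nonneg[OF m] by (simp add: l_def)
  have c: "c a j \<ge> 0" for a j by (simp add: c_def)
  have term_le: "l powr (3/2) * x ! j powr (- (1 / (2 * \<alpha>))) * c a j \<le>
      q * l * (l powr \<alpha> * (c a j / x ! j)) + (1 - q) * l * c a j" if "x ! j > 0" for a j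
  proof -
    have "l powr (3/2) * x ! j powr (- (1 / (2 * \<alpha>))) * c a j \<le>
        (q * l * (l powr \<alpha> / x ! j) + (1 - q) * l) * c a j"
      using three_halves_am_gm[OF l that alpha_ge alpha_le] c unfolding q_def by (rule mult_right_mono)
    then show ?thesis by (simp add: algebra_simps)
  qed
  have "(\<Sum>a<dA. \<Sum>j<dB. if x ! j > 0 then l powr (3/2) * x ! j powr (- (1 / (2 * \<alpha>))) * c a j else 0)
      \<le> (\<Sum>a<dA. \<Sum>j<dB.
          if x ! j > 0 then q * l * (l powr \<alpha> * (c a j / x ! j)) + (1 - q) * l * c a j else 0)"
    using term_le by (intro sum_mono) auto
  also have "\<dots> = q * l * (\<Sum>a<dA. \<mu> ! m * (\<Sum>j<dB. if x ! j > 0 then c a j / x ! j else 0)) +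
      (1 - q) * l * (\<Sum>a<dA. \<Sum>j<dB. if x ! j > 0 then c a j else 0)"
  proof -
    have "(if x ! j > 0 then q * l * (l powr \<alpha> * (c a j / x ! j)) + (1 - q) * l * c a j else 0) =
      q * l * (\<mu> ! m * (if x ! j > 0 then c a j / x ! j else 0)) +
        (1 - q) * l * (if x ! j > 0 then c a j else 0)"
      for a j using m by (simp add: mu_nth l_def)
    then show ?thesis by (simp add: sum.distrib sum_distrib_left)
  qed
  also have "\<dots> \<le> q * l * (\<Sum>a<dA. 1) + (1 - q) * l * (\<Sum>a<dA. \<Sum>j<dB. c a j)"
    using ptrace_pinv_bound[OF m, unfolded c_def[symmetric]] q l c
    by (intro add_mono mult_left_mono sum_mono) auto
  also have "\<dots> = (q * real dA + (1 - q)) * l"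
    using overlap_row_norm[OF m] by (simp add: c_def algebra_simps)
  finally show ?thesis unfolding q_def l_def c_def .
qed

lemma trace_term_le: "trace_term \<le> sqrt Z * real dA"
proof -
  have "(\<Sum>m<dA * dB. \<Sum>a<dA. \<Sum>j<dB. if x ! j > 0 then
      lam ! m powr (3/2) * x ! j powr (- (1 / (2 * \<alpha>))) * (cmod (overlap m a j))\<^sup>2 else 0)
    \<le> (\<Sum>m<dA * dB. (1 / (2 * \<alpha>) * real dA + (1 - 1 / (2 * \<alpha>))) * lam ! m)"
    by (intro sum_mono block_sum_le) simp
  also have "\<dots> = 1 / (2 * \<alpha>) * real dA + (1 - 1 / (2 * \<alpha>))"
    using sum_lam by (simp add: sum_distrib_left[symmetric])
  also have "\<dots> \<le> real dA"
  proof -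
    have "0 \<le> (1 - 1 / (2 * \<alpha>)) * (real dA - 1)"
      using alpha_ge dA_ge_1 by (intro mult_nonneg_nonneg) (auto simp: field_simps)
    then show ?thesis by (simp add: algebra_simps diff_divide_distrib)
  qed
  finally show ?thesis
    unfolding trace_term_eq using Z_pos by (intro mult_left_mono) auto
qed

lemma trace_term_pos: "trace_term > 0"
proof -
  obtain m where m: "m < dA * dB" and lam: "lam ! m > 0" by (rule lam_pos_ex)
  obtain a j where a: "a < dA" and j: "j < dB" and g: "overlap m a j \<noteq> 0"
  proof (rule ccontr)
    assume "\<not> thesis"
    then have "(\<Sum>a<dA. \<Sum>j<dB. (cmod (overlap m a j))\<^sup>2) = 0" using that by (force intro!: sum.neutral)
    then show False using overlap_row_norm[OF m] by simp
  qed
  have "\<mu> ! m > 0" using lam m by (simp add: mu_nth)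
  then have "x ! j > 0" using overlap_eq_0[OF j _ m _ a] g x_nonneg[OF j] by fastforce
  then have "tau ! j > 0" using Z_pos by (simp add: tau_nth[OF j])
  then have "lam ! m powr (3/2) * tau ! j powr (- (1/2)) * (cmod (overlap m a j))\<^sup>2 > 0"
    using lam g by simp
  then show ?thesis
    unfolding trace_term_def using m a j
    by (intro sum_pos2[of _ m] sum_pos2[of _ a] sum_pos2[of _ j] sum_nonneg) auto
qed

lemma Re_mtrace_eq_trace_term:
  "Re (mtrace (mat_powr (dA * dB) (spectral U lam) (3/2) *
     mat_powr (dA * dB) (spectral (id_tensor dA dB V) (concat (replicate dA tau))) (1 - 3/2)))
   = trace_term"
proof -
  let ?W = "id_tensor dA dB V"
  have W: "unitary_mat (dA * dB) ?W" by (rule unitary_id_tensor[OF V dB_pos])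
  have "mtrace (mat_powr (dA * dB) (spectral U lam) (3/2) *
      mat_powr (dA * dB) (spectral ?W (concat (replicate dA tau))) (1 - 3/2)) =
    of_real (\<Sum>m<dA * dB. \<Sum>k<dA * dB. lam ! m powr (3/2) * concat (replicate dA tau) ! k powr (- (1/2)) *
      (cmod ((adj U * ?W) $$ (m, k)))\<^sup>2)"
    using mtrace_spectral_mult[OF U W, of "map (\<lambda>y. y powr (3/2)) lam"
        "map (\<lambda>y. y powr (1 - 3/2)) (concat (replicate dA tau))"]
      mat_powr_spectral[OF U length_lam] mat_powr_spectral[OF W] length_lam length_tau
    by simp
  also have "\<dots> = of_real trace_term"
    unfolding trace_term_def sum_lessThan_mult_blocks[where g = "\<lambda>k. _ k"]
    using length_tau by (simp add: overlap_def nth_concat_replicate block_index_less)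
  finally show ?thesis by simp
qed

lemma supp_subset_supp_sigma:
  "supp (dA * dB) (spectral U lam) \<subseteq>
    supp (dA * dB) (spectral (id_tensor dA dB V) (concat (replicate dA tau)))"
proof (rule supp_spectral_subset[OF unitary_id_tensor[OF V dB_pos] U_carrier _ length_lam])
  show "length (concat (replicate dA tau)) = dA * dB" by (simp add: length_tau)
  fix k m assume k: "k < dA * dB" and m: "m < dA * dB"
    and t: "concat (replicate dA tau) ! k = 0" and "lam ! m \<noteq> 0"
  then have "\<mu> ! m > 0" using lam_nonneg[OF m] by (simp add: mu_nth order_less_le)
  define a j where "a = k div dB" and "j = k mod dB"
  have a: "a < dA" and j: "j < dB" and k_eq: "k = a * dB + j"
    using k dB_pos by (auto simp: a_def j_def less_mult_imp_div_less)
  have "x ! j = 0" using t tau_eq_0_iff[OF j] length_tau k by (simp add: nth_concat_replicate j_def)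
  then have "overlap m a j = 0" using overlap_eq_0[OF j _ m \<open>\<mu> ! m > 0\<close> a] by simp
  have "adj (id_tensor dA dB V) * U = adj (adj U * id_tensor dA dB V)"
    using U_carrier by (simp add: adj_mult[of _ "dA * dB" "dA * dB" _ "dA * dB"])
  then have "(adj (id_tensor dA dB V) * U) $$ (k, m) = cnj (overlap m a j)"
    using k m carrier_matD[OF U_carrier] carrier_matD[OF id_tensor_carrier]
    by (simp add: overlap_def k_eq)
  then show "(adj (id_tensor dA dB V) * U) $$ (k, m) = 0"
    using \<open>overlap m a j = 0\<close> by simp
qed

lemma petz_renyi_le:
  "petz_renyi (dA * dB) (3/2) (spectral U lam) (spectral (id_tensor dA dB V) (concat (replicate dA tau)))
    \<le> ereal (4 * ln (real dA))"
proof -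
  have "real dA \<le> real dA * real dA" using dA_ge_1 by simp
  then have "sqrt Z \<le> sqrt (real dA * real dA)"
    using Z_le_dA by (intro real_sqrt_le_mono) linarith
  then have "sqrt Z \<le> real dA" by simp
  then have "trace_term \<le> real dA * real dA"
    using trace_term_le dA_ge_1 by (meson mult_right_mono order.trans of_nat_0_le_iff)
  then have "ln trace_term \<le> 2 * ln (real dA)"
    using trace_term_pos dA_ge_1 by (simp add: ln_mult flip: ln_le_cancel_iff)
  then show ?thesis
    unfolding petz_renyi_def using supp_subset_supp_sigma Re_mtrace_eq_trace_term by simp
qed

end

theorem lemma5:
  fixes dA dB :: nat and \<alpha> :: real and \<rho> :: "complex mat"
  assumes "1/2 \<le> \<alpha>" and "\<alpha> \<le> 1"
    and "density (dA * dB) \<rho>"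
  shows "let M = mat_powr dB (ptrace_A dA dB (mat_powr (dA * dB) \<rho> \<alpha>)) (1 / \<alpha>);
             Z = mtrace M;
             \<sigma> = (1 / Z) \<cdot>\<^sub>m M
         in petz_renyi (dA * dB) (3/2) \<rho> (id_tensor dA dB \<sigma>) \<le> ereal (4 * ln (real dA))"
proof -
  obtain U lam where U: "unitary_mat (dA * dB) U" and lam: "length lam = dA * dB"
    and \<rho>: "\<rho> = spectral U lam"
    and lam_nonneg: "\<And>m. m < dA * dB \<Longrightarrow> lam ! m \<ge> 0" and sum_lam: "(\<Sum>m<dA * dB. lam ! m) = 1"
    using density_spectral_decomposition[OF assms(3)] by blast
  define \<mu> where "\<mu> = map (\<lambda>l. l powr \<alpha>) lam"
  have \<rho>\<alpha>: "mat_powr (dA * dB) \<rho> \<alpha> = spectral U \<mu>"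
    unfolding \<rho> \<mu>_def using U lam by (rule mat_powr_spectral)
  have "adj (ptrace_A dA dB (spectral U \<mu>)) = ptrace_A dA dB (spectral U \<mu>)"
    using unitary_carrier[OF U] lam by (simp add: adj_ptrace_A adj_spectral \<mu>_def)
  then obtain V x where V: "unitary_mat dB V" and x: "length x = dB"
    and ptrace: "ptrace_A dA dB (spectral U \<mu>) = spectral V x"
    using hermitian_spectral_decomposition[OF ptrace_A_carrier] by blast
  have "dB > 0" using sum_lam by (cases dB) auto
  interpret petz_optimal_marginal dA dB U V \<mu> x lam \<alpha>
    by unfold_locales (use U lam V x ptrace lam_nonneg sum_lam assms(1,2) \<open>dB > 0\<close> in \<open>auto simp: \<mu>_def\<close>)
  have M: "mat_powr dB (ptrace_A dA dB (mat_powr (dA * dB) \<rho> \<alpha>)) (1 / \<alpha>) =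
      spectral V (map (\<lambda>y. y powr (1 / \<alpha>)) x)"
    unfolding \<rho>\<alpha> ptrace using V x by (rule mat_powr_spectral)
  show ?thesis
    unfolding Let_def M normalised_marginal id_tensor_spectral[OF V_carrier length_tau]
    unfolding \<rho> by (rule petz_renyi_le)
qed

end
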